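(* Let $n\in\mathbb{N}$ and let $\mathbf{s}=(s_0,\ldots,s_n)\subset[0,\infty)$ be positive on $(0,1]$. Set $K=\mathrm{ind}_1(\mathbf{s})$ and $N=2K-1$. Then (i) $s_k\in\big(t_1((s_{k+1},\ldots,s_n)),\infty\big)$ for $k\in\mathbb{N}\cap[n-N,n-1]$; (ii) $s_k=t_1((s_{k+1},\ldots,s_{k+N+1}))$ for $k\in\mathbb{N}\cap[0,n-N-1]$.
   Context: For $a<b$ and a finite sequence $\mathbf{u}=(u_0,\ldots,u_m)$, $\mathbf{u}$ is positive on $[a,b]$ if the functional $\sigma(x^k)=u_k$ is $\ge0$ on every real polynomial of degree $\le m$ nonnegative on $[a,b]$; positive on $(0,1]$ means positive on some $[a,b]$ with $0<a<b\le1$. $\mathcal{M}_{a,b}(\mathbf{u})$ is the set of positive Borel measures on $[a,b]$ with $k$-th moments $u_k$; $\mathcal{M}_1(\mathbf{u})$ is the set of positive Borel measures on $(0,1]$ supported in some $[a,b]\subset(0,1]$, $a>0$, with these moments. For finitely supported $\mu$, $\mathrm{ind}_1(\mu)=\#(\mathrm{supp}\,\mu\cap(0,1))+\frac12\chi_{\mathrm{supp}\,\mu}(1)$, else $\infty$; $\mathrm{ind}_1(\mathbf{u})=\min\{\mathrm{ind}_1(\mu):\mu\in\mathcal{M}_1(\mathbf{u})\}$ (a half-integer or integer). $t_{a,b}(\mathbf{u})=\inf\{\int\frac1t\,d\mu:\mu\in\mathcal{M}_{a,b}(\mathbf{u})\}$ ($\inf\varnothing=\infty$) and $t_1(\mathbf{u})=\inf_{0<a<b\le1}t_{a,b}(\mathbf{u})$.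 *)

theory Defs
  imports "HOL-Analysis.Analysis" "HOL-Probability.Probability" "HOL-Computational_Algebra.Polynomial"
begin

definition moment_functional :: "real list \<Rightarrow> real poly \<Rightarrow> real" where
  "moment_functional u p = (\<Sum>k<length u. coeff p k * u ! k)"

definition positive_on :: "real list \<Rightarrow> real \<Rightarrow> real \<Rightarrow> bool" where
  "positive_on u a b \<longleftrightarrow>
     (\<forall>p :: real poly. degree p + 1 \<le> length u \<longrightarrow> (\<forall>x\<in>{a..b}. poly p x \<ge> 0)
        \<longrightarrow> moment_functional u p \<ge> 0)"

definition positive_on_01 :: "real list \<Rightarrow> bool" where
  "positive_on_01 u \<longleftrightarrow> (\<exists>a b. 0 < a \<and> a < b \<and> b \<le> 1 \<and> positive_on u a b)"

definition moment_measures :: "real list \<Rightarrow> real \<Rightarrow> real \<Rightarrow> real measure set" where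
  "moment_measures u a b =
     {M. sets M = sets borel \<and> finite_measure M \<and> emeasure M (- {a..b}) = 0 \<and>
         (\<forall>k<length u. integrable M (\<lambda>x. x ^ k) \<and> (\<integral>x. x ^ k \<partial>M) = u ! k)}"

definition moment_measures_1 :: "real list \<Rightarrow> real measure set" where
  "moment_measures_1 u = (\<Union>{moment_measures u a b | a b. 0 < a \<and> a < b \<and> b \<le> 1})"

definition msupp :: "real measure \<Rightarrow> real set" where
  "msupp M = {x. \<forall>e>0. emeasure M (ball x e) > 0}"

definition ind1_measure :: "real measure \<Rightarrow> ereal" where
  "ind1_measure M =
     (if finite (msupp M)
      then ereal (real (card (msupp M \<inter> {0<..<1})) + (if 1 \<in> msupp M then 1/2 else 0))
      else \<infinity>)"

definition ind1 :: "real list \<Rightarrow> ereal" where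
  "ind1 u = (INF M\<in>moment_measures_1 u. ind1_measure M)"

definition t_ab :: "real list \<Rightarrow> real \<Rightarrow> real \<Rightarrow> ereal" where
  "t_ab u a b = (INF M\<in>moment_measures u a b. ereal (\<integral>t. 1 / t \<partial>M))"

definition t1 :: "real list \<Rightarrow> ereal" where
  "t1 u = (INF p\<in>{(a, b). 0 < a \<and> a < b \<and> b \<le> 1}. t_ab u (fst p) (snd p))"

end

theory Submission
  imports Defs
begin

text \<open>
  A sequence positive on [a, b] \<subseteq> (0, 1] is the moment sequence of a finitely atomic measure:
  take the moment vector of m + 1 atoms in [a, b] nearest to s (a Caratheodory reduction keeps
  the number of atoms at m + 1 when an atom is added); the residual is orthogonal to it and
  nonpositive against every point mass, so positivity of s forces it to vanish. Among all such
  measures choose \<mu> = \<Sum>x\<in>S. \<omega>(x) \<delta>_x with minimal index, so that K = 2 ind_1(s) = twice_ind1 S;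
  the measure x^k \<mu> represents (s_k, s_(k+1), ...).

  (ii) If k + K \<le> n, let 1 - t q(t) = P(t) / P(0) with P(t) = \<Prod>x\<in>S\<inter>(0,1). (t - x)^2, times 1 - t
  if 1 \<in> S. Then q has degree < K, q(t) \<le> 1/t on (0, 1] and x q(x) = 1 on S; integrating q against
  any measure with moments (s_(k+1), ..., s_(k+K)) shows \<integral> 1/t \<ge> s_k, with equality for x^(k+1) \<mu>.

  (i) If fewer than K moments follow s_k, a polynomial of degree < K that is nonnegative on
  [a/2, 1] cannot vanish on S, because its interior zeros are double. By compactness
  \<Sum>x\<in>S. \<omega>(x) x^k p(x) then dominates \<delta> times the coefficient norm of p, so
  (s_k - \<delta>, s_(k+1), ..., s_n) is still positive on [a/2, 1] and its representing measure
  yields t_1 \<le> s_k - \<delta>.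
\<close>

definition atomic_measure :: "real set \<Rightarrow> (real \<Rightarrow> real) \<Rightarrow> real measure" where
  "atomic_measure S w = distr (density (count_space S) (\<lambda>x. ennreal (w x))) borel (\<lambda>x. x)"

lemma sets_atomic_measure [simp]: "sets (atomic_measure S w) = sets borel"
  by (simp add: atomic_measure_def)

lemma space_atomic_measure [simp]: "space (atomic_measure S w) = UNIV"
  by (simp add: atomic_measure_def)

lemma emeasure_atomic_measure:
  assumes "finite S" "A \<in> sets borel"
  shows "emeasure (atomic_measure S w) A = (\<Sum>x\<in>S \<inter> A. ennreal (w x))"
proof -
  have "emeasure (atomic_measure S w) A
      = emeasure (density (count_space S) (\<lambda>x. ennreal (w x))) (A \<inter> S)"
    unfolding atomic_measure_def using assms by (subst emeasure_distr) (auto simp: Int_commute)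
  also have "\<dots> = (\<Sum>x\<in>S. ennreal (w x) * indicator (A \<inter> S) x)"
    using assms by (simp add: emeasure_density nn_integral_count_space_finite)
  also have "\<dots> = (\<Sum>x\<in>S \<inter> A. ennreal (w x))"
    using assms by (simp add: sum.inter_restrict[symmetric] indicator_def Int_commute)
  finally show ?thesis .
qed

lemma finite_measure_atomic_measure: "finite S \<Longrightarrow> finite_measure (atomic_measure S w)"
  by (intro finite_measureI) (simp add: emeasure_atomic_measure)

lemma
  assumes "finite S" "\<forall>x\<in>S. w x \<ge> 0" "f \<in> borel_measurable borel"
  shows integrable_atomic_measure: "integrable (atomic_measure S w) (f :: real \<Rightarrow> real)"
    and integral_atomic_measure: "(\<integral>x. f x \<partial>atomic_measure S w) = (\<Sum>x\<in>S. w x * f x)"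
  using assms unfolding atomic_measure_def
  by (simp_all add: integrable_distr_eq integral_distr integrable_density integral_density
      AE_count_space integrable_count_space lebesgue_integral_count_space_finite)

lemma msupp_atomic_measure:
  assumes "finite S" "\<forall>x\<in>S. w x > 0"
  shows "msupp (atomic_measure S w) = S"
proof (intro equalityI subsetI)
  fix x assume "x \<in> S"
  show "x \<in> msupp (atomic_measure S w)"
    unfolding msupp_def
  proof (intro CollectI allI impI)
    fix e :: real assume "e > 0"
    have "0 < ennreal (w x)" using \<open>x \<in> S\<close> assms by simp
    also have "\<dots> \<le> (\<Sum>y\<in>S \<inter> ball x e. ennreal (w y))"
      using \<open>x \<in> S\<close> \<open>e > 0\<close> assms by (intro member_le_sum) auto
    finally show "emeasure (atomic_measure S w) (ball x e) > 0"
      using assms by (simp add: emeasure_atomic_measure)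
  qed
next
  fix x assume x: "x \<in> msupp (atomic_measure S w)"
  show "x \<in> S"
  proof (rule ccontr)
    assume "x \<notin> S"
    moreover have "open (- S)" using assms by (simp add: finite_imp_closed open_Compl)
    ultimately obtain e where "e > 0" "ball x e \<subseteq> - S"
      using open_contains_ball by blast
    then have "emeasure (atomic_measure S w) (ball x e) = 0"
      using assms by (auto simp: emeasure_atomic_measure)
    with x \<open>e > 0\<close> show False unfolding msupp_def by auto
  qed
qed

lemma msupp_subset_interval:
  assumes "sets M = sets borel" "emeasure M (- {a..b}) = 0"
  shows "msupp M \<subseteq> {a..b :: real}"
proof
  fix x assume x: "x \<in> msupp M"
  show "x \<in> {a..b}"
  proof (rule ccontr)
    assume "x \<notin> {a..b}"
    moreover have "open (- {a..b})" by (simp add: open_Compl)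
    ultimately obtain e where "e > 0" "ball x e \<subseteq> - {a..b}"
      using open_contains_ball by blast
    then have "emeasure M (ball x e) = 0"
      using assms emeasure_mono[of "ball x e" "- {a..b}" M] by simp
    with x \<open>e > 0\<close> show False unfolding msupp_def by auto
  qed
qed

lemma emeasure_compl_msupp:
  assumes sets: "sets M = sets borel"
  shows "emeasure M (- msupp M) = 0"
proof -
  define F where "F = {ball x e | x e. emeasure M (ball x e) = 0}"
  have "- msupp M = \<Union>F"
  proof (intro equalityI subsetI)
    fix y assume "y \<in> - msupp M"
    then obtain e where "e > 0" "emeasure M (ball y e) = 0"
      unfolding msupp_def by auto
    then show "y \<in> \<Union>F" unfolding F_def by (intro UnionI[of "ball y e"]) auto
  next
    fix y assume "y \<in> \<Union>F"
    then obtain x e where null: "emeasure M (ball x e) = 0" and y: "y \<in> ball x e"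
      unfolding F_def by auto
    define d where "d = e - dist x y"
    have "d > 0" "ball y d \<subseteq> ball x e"
      using y by (auto simp: d_def ball_subset_ball_iff dist_commute)
    then have "emeasure M (ball y d) = 0"
      using null sets emeasure_mono[of "ball y d" "ball x e" M] by simp
    with \<open>d > 0\<close> show "y \<in> - msupp M" unfolding msupp_def by auto
  qed
  moreover obtain F' where "F' \<subseteq> F" "countable F'" "\<Union>F' = \<Union>F"
    using Lindelof[of F] unfolding F_def by auto
  moreover have "(\<Union>A\<in>F'. A) \<in> null_sets M"
    using \<open>F' \<subseteq> F\<close> \<open>countable F'\<close> sets by (intro null_sets_UN') (auto simp: F_def null_sets_def)
  ultimately show ?thesis by auto
qed

lemma finite_msupp_eq_atomic_measure:
  assumes sets: "sets M = sets borel" and "finite_measure M" and fin: "finite (msupp M)"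
  shows "M = atomic_measure (msupp M) (\<lambda>x. measure M {x})"
proof (rule measure_eqI)
  interpret finite_measure M by fact
  fix A assume A: "A \<in> sets M"
  have null: "- msupp M \<in> null_sets M"
    using emeasure_compl_msupp[OF sets] fin sets by (auto simp: null_sets_def finite_imp_closed)
  have "emeasure M A = emeasure M (msupp M \<inter> A)"
    using emeasure_Diff_null_set[OF null A] by (simp add: Diff_eq Int_commute)
  also have "\<dots> = (\<Sum>x\<in>msupp M \<inter> A. emeasure M {x})"
    using fin sets by (intro emeasure_eq_sum_singleton) auto
  also have "\<dots> = emeasure (atomic_measure (msupp M) (\<lambda>x. measure M {x})) A"
    using A fin sets by (simp add: emeasure_atomic_measure emeasure_eq_measure)
  finally show "emeasure M A = emeasure (atomic_measure (msupp M) (\<lambda>x. measure M {x})) A" .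
qed (simp add: assms)

lemma measure_singleton_pos_msupp:
  assumes "sets M = sets borel" "finite_measure M" "finite (msupp M)" and x: "x \<in> msupp M"
  shows "measure M {x} > 0"
proof -
  have "closed (msupp M - {x})" using assms by (simp add: finite_imp_closed)
  then obtain e where "e > 0" and e: "ball x e \<subseteq> - (msupp M - {x})"
    by (metis Compl_iff DiffD2 insertI1 open_Compl open_contains_ball)
  then have "msupp M \<inter> ball x e = {x}" using x by auto
  then have "emeasure M (ball x e) = ennreal (measure M {x})"
    using assms by (subst finite_msupp_eq_atomic_measure) (simp_all add: emeasure_atomic_measure)
  with x \<open>e > 0\<close> show ?thesis unfolding msupp_def by force
qed

definition atomic_moments :: "real set \<Rightarrow> (real \<Rightarrow> real) \<Rightarrow> real list \<Rightarrow> bool" where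
  "atomic_moments S w v \<longleftrightarrow> (\<forall>j<length v. v ! j = (\<Sum>x\<in>S. w x * x ^ j))"

lemma atomic_moments_take: "atomic_moments S w v \<Longrightarrow> atomic_moments S w (take n v)"
  by (simp add: atomic_moments_def)

lemma atomic_moments_drop:
  "atomic_moments S w v \<Longrightarrow> atomic_moments S (\<lambda>x. w x * x ^ k) (drop k v)"
  by (simp add: atomic_moments_def power_add mult.assoc)

lemma poly_eq_sum_lessThan:
  fixes p :: "'a::comm_semiring_1 poly"
  assumes "\<forall>j\<ge>n. coeff p j = 0"
  shows "poly p x = (\<Sum>j<n. coeff p j * x ^ j)"
proof (cases "p = 0")
  case False
  then have "degree p < n" using assms leading_coeff_0_iff not_le by blast
  have "poly p x = (\<Sum>j\<le>degree p. coeff p j * x ^ j)" by (rule poly_altdef)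
  also have "\<dots> = (\<Sum>j<n. coeff p j * x ^ j)"
    using \<open>degree p < n\<close> by (intro sum.mono_neutral_left) (auto simp: coeff_eq_0)
  finally show ?thesis .
qed simp

lemma moment_functional_atomic:
  assumes "finite S" "atomic_moments S w v" "\<forall>j\<ge>length v. coeff p j = 0"
  shows "moment_functional v p = (\<Sum>x\<in>S. w x * poly p x)"
proof -
  have "moment_functional v p = (\<Sum>j<length v. \<Sum>x\<in>S. coeff p j * (w x * x ^ j))"
    using assms by (simp add: moment_functional_def atomic_moments_def sum_distrib_left)
  also have "\<dots> = (\<Sum>x\<in>S. w x * (\<Sum>j<length v. coeff p j * x ^ j))"
    by (subst sum.swap) (simp add: sum_distrib_left algebra_simps)
  finally show ?thesis using assms by (simp add: poly_eq_sum_lessThan)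
qed

lemma atomic_measure_in_moment_measures:
  assumes "finite S" "S \<subseteq> {a..b}" "\<forall>x\<in>S. w x \<ge> 0" "atomic_moments S w v"
  shows "atomic_measure S w \<in> moment_measures v a b"
proof -
  have "S \<inter> - {a..b} = {}" using assms by auto
  then show ?thesis
    using assms by (auto simp: moment_measures_def atomic_moments_def emeasure_atomic_measure
        finite_measure_atomic_measure integrable_atomic_measure integral_atomic_measure)
qed

lemma t1_le_integral:
  assumes "\<nu> \<in> moment_measures u a b" "0 < a" "a < b" "b \<le> 1"
  shows "t1 u \<le> ereal (\<integral>t. 1 / t \<partial>\<nu>)"
proof -
  have "t1 u \<le> t_ab u a b"
    unfolding t1_def using assms by (intro INF_lower2[of "(a, b)"]) auto
  also have "\<dots> \<le> ereal (\<integral>t. 1 / t \<partial>\<nu>)"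
    unfolding t_ab_def using assms by (intro INF_lower) auto
  finally show ?thesis .
qed

lemma t1_le_atomic:
  assumes "finite S" "S \<subseteq> {a..b}" "0 < a" "a < b" "b \<le> 1"
    and "\<forall>x\<in>S. w x \<ge> 0" "atomic_moments S w u"
  shows "t1 u \<le> ereal (\<Sum>x\<in>S. w x / x)"
  using t1_le_integral[OF atomic_measure_in_moment_measures[OF assms(1,2,6,7)] assms(3-5)]
    assms(1,6) by (simp add: integral_atomic_measure)

lemma t1_ge:
  assumes "\<And>a b \<nu>. 0 < a \<Longrightarrow> a < b \<Longrightarrow> b \<le> 1 \<Longrightarrow> \<nu> \<in> moment_measures u a b
             \<Longrightarrow> c \<le> (\<integral>t. 1 / t \<partial>\<nu>)"
  shows "ereal c \<le> t1 u"
  unfolding t1_def t_ab_def using assms by (auto intro!: INF_greatest)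

lemma moment_functional_le_integral_inverse:
  assumes \<nu>: "\<nu> \<in> moment_measures u a b" and "0 < a" "b \<le> 1"
    and q: "\<forall>j\<ge>length u. coeff q j = 0" "\<forall>t\<in>{0<..1}. poly q t \<le> 1 / t"
  shows "moment_functional u q \<le> (\<integral>t. 1 / t \<partial>\<nu>)"
proof -
  have sets: "sets \<nu> = sets borel" and "finite_measure \<nu>" and null: "emeasure \<nu> (- {a..b}) = 0"
    and mom: "\<And>j. j < length u \<Longrightarrow> integrable \<nu> (\<lambda>x. x ^ j) \<and> (\<integral>x. x ^ j \<partial>\<nu>) = u ! j"
    using \<nu> by (auto simp: moment_measures_def)
  interpret finite_measure \<nu> by fact
  have ae: "AE x in \<nu>. x \<in> {a..b}"
    using null sets by (intro AE_I'[of "- {a..b}"]) (auto simp: null_sets_def)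
  have q_eq: "poly q = (\<lambda>x. \<Sum>j<length u. coeff q j * x ^ j)"
    using q by (auto simp: poly_eq_sum_lessThan)
  have "moment_functional u q = (\<integral>x. poly q x \<partial>\<nu>)"
    unfolding q_eq moment_functional_def using mom by (simp add: Bochner_Integration.integral_sum)
  also have "\<dots> \<le> (\<integral>t. 1 / t \<partial>\<nu>)"
  proof (rule integral_mono_AE)
    show "integrable \<nu> (poly q)"
      unfolding q_eq using mom by (intro Bochner_Integration.integrable_sum integrable_mult_right) auto
    show "integrable \<nu> (\<lambda>t. 1 / t)"
    proof (rule integrable_const_bound[where B = "1 / a"])
      show "AE x in \<nu>. norm (1 / x) \<le> 1 / a"
        using ae by eventually_elim (use \<open>0 < a\<close> in \<open>auto simp: divide_simps\<close>)
    qed (simp add: measurable_cong_sets[OF sets refl])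
    show "AE x in \<nu>. poly q x \<le> 1 / x"
      using ae by eventually_elim (use q \<open>0 < a\<close> \<open>b \<le> 1\<close> in auto)
  qed
  finally show ?thesis .
qed

lemma divided_difference_power_eq_0:
  fixes y :: "nat \<Rightarrow> real"
  assumes inj: "inj_on y {..p}" and "j < p"
  shows "(\<Sum>i\<le>p. y i ^ j / (\<Prod>l\<in>{..p}-{i}. y i - y l)) = 0"
proof -
  define d where "d i = (\<Prod>l\<in>{..p}-{i}. y i - y l)" for i
  define L where "L i = (\<Prod>l\<in>{..p}-{i}. [:- y l, 1:])" for i
  define g where "g = (\<Sum>i\<le>p. smult (y i ^ j / d i) (L i))"
  have d: "d i \<noteq> 0" if "i \<le> p" for i
    unfolding d_def using inj that by (auto simp: inj_on_def)
  have deg_L: "degree (L i) = p" and lead_L: "coeff (L i) p = 1" if "i \<le> p" for i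
  proof -
    show "degree (L i) = p"
      unfolding L_def using that by (subst degree_prod_eq_sum_degree) auto
    then show "coeff (L i) p = 1"
      using lead_coeff_prod[of "\<lambda>l. [:- y l, 1:]" "{..p}-{i}"] by (simp add: L_def)
  qed
  \<comment> \<open>g is the Lagrange interpolant of x^j at the nodes, hence equal to x^j\<close>
  have "g = monom 1 j"
  proof (rule poly_eqI_degree[of "y ` {..p}"])
    fix x assume "x \<in> y ` {..p}"
    then obtain k where k: "k \<le> p" "x = y k" by auto
    have "poly g x = (\<Sum>i\<le>p. if i = k then y k ^ j else 0)"
      unfolding g_def poly_sum
    proof (intro sum.cong refl)
      fix i assume "i \<in> {..p}"
      show "poly (smult (y i ^ j / d i) (L i)) x = (if i = k then y k ^ j else 0)"
        using k d[of k] by (auto simp: L_def d_def poly_prod)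
    qed
    then show "poly g x = poly (monom 1 j) x" using k by (simp add: poly_monom)
  next
    have "card (y ` {..p}) = Suc p" using inj by (simp add: card_image)
    moreover have "degree g \<le> p"
      unfolding g_def by (intro degree_sum_le order.trans[OF degree_smult_le]) (auto simp: deg_L)
    ultimately show "degree g < card (y ` {..p})" "degree (monom (1::real) j) < card (y ` {..p})"
      using \<open>j < p\<close> by (auto simp: degree_monom_eq)
  qed
  then have "coeff g p = 0" using \<open>j < p\<close> by simp
  then show ?thesis by (simp add: g_def coeff_sum lead_L d_def)
qed

text \<open>A pair (t, l) with M entries stands for the discrete measure with weight l i at the node t i,
  i < M. Unlike atomic_moments, nodes may repeat and weights may vanish, which the reduction of
  the number of atoms below needs.\<close>

definition atoms_moment :: "(nat \<Rightarrow> real) \<Rightarrow> (nat \<Rightarrow> real) \<Rightarrow> nat \<Rightarrow> nat \<Rightarrow> real" where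
  "atoms_moment t l M j = (\<Sum>i<M. l i * t i ^ j)"

definition atoms_in :: "real \<Rightarrow> real \<Rightarrow> nat \<Rightarrow> (nat \<Rightarrow> real) \<Rightarrow> (nat \<Rightarrow> real) \<Rightarrow> bool" where
  "atoms_in a b M t l \<longleftrightarrow> (\<forall>i<M. a \<le> t i \<and> t i \<le> b \<and> 0 \<le> l i)"

lemma atoms_drop_zero_weight:
  assumes "atoms_in a b (Suc M) t l" "i < Suc M" "l i = 0"
  shows "\<exists>t' l'. atoms_in a b M t' l' \<and> (\<forall>j. atoms_moment t' l' M j = atoms_moment t l (Suc M) j)"
proof (intro exI conjI allI)
  define \<tau> where "\<tau> = Transposition.transpose i M"
  have \<tau>: "\<tau> permutes {..<Suc M}"
    unfolding \<tau>_def using assms(2) by (intro permutes_swap_id) auto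
  then show "atoms_in a b M (t \<circ> \<tau>) (l \<circ> \<tau>)"
    using assms(1) permutes_in_image[OF \<tau>] unfolding atoms_in_def by simp
  fix j
  have "atoms_moment t l (Suc M) j = (\<Sum>k<Suc M. l (\<tau> k) * t (\<tau> k) ^ j)"
    unfolding atoms_moment_def by (subst sum.permute[OF \<tau>]) (simp add: comp_def)
  then show "atoms_moment (t \<circ> \<tau>) (l \<circ> \<tau>) M j = atoms_moment t l (Suc M) j"
    using assms(3) by (simp add: atoms_moment_def \<tau>_def)
qed

lemma atoms_merge_equal_nodes:
  assumes "atoms_in a b (Suc M) t l" "i < Suc M" "k < Suc M" "i \<noteq> k" "t i = t k"
  defines "l' \<equiv> l(k := l k + l i, i := 0)"
  shows "atoms_in a b (Suc M) t l' \<and> (\<forall>j. atoms_moment t l' (Suc M) j = atoms_moment t l (Suc M) j)"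
proof (intro conjI allI)
  show "atoms_in a b (Suc M) t l'" using assms unfolding atoms_in_def l'_def by auto
  fix j
  have "atoms_moment t l' (Suc M) j - atoms_moment t l (Suc M) j
      = (\<Sum>x<Suc M. (if x = k then l i * t k ^ j else 0) - (if x = i then l i * t i ^ j else 0))"
    unfolding atoms_moment_def sum_subtractf[symmetric]
    by (intro sum.cong refl) (use assms in \<open>auto simp: algebra_simps\<close>)
  also have "\<dots> = 0" using assms by (simp add: sum_subtractf del: sum.lessThan_Suc)
  finally show "atoms_moment t l' (Suc M) j = atoms_moment t l (Suc M) j" by simp
qed

lemma atoms_kill_weight:
  assumes atoms: "atoms_in a b (Suc M) t l" and inj: "inj_on t {..M}" and "0 < M"
  shows "\<exists>l'. atoms_in a b (Suc M) t l' \<and> (\<exists>i<Suc M. l' i = 0)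
    \<and> (\<forall>j<M. atoms_moment t l' (Suc M) j = atoms_moment t l (Suc M) j)"
proof -
  define w where "w i = 1 / (\<Prod>l\<in>{..M}-{i}. t i - t l)" for i
  have w_kernel: "(\<Sum>i<Suc M. w i * t i ^ j) = 0" if "j < M" for j
    using divided_difference_power_eq_0[OF inj that] by (simp add: w_def lessThan_Suc_atMost)
  have w_nz: "w i \<noteq> 0" if "i < Suc M" for i
    using inj that unfolding w_def by (auto simp: inj_on_def)
  define P where "P = {i. i < Suc M \<and> w i > 0}"
  have "P \<noteq> {}"
  proof
    assume "P = {}"
    then have "\<forall>i\<in>{..<Suc M}. 0 \<le> - w i" by (force simp: P_def)
    moreover have "(\<Sum>i<Suc M. - w i) = 0" using w_kernel[OF \<open>0 < M\<close>] by (simp add: sum_negf)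
    ultimately have "\<forall>i\<in>{..<Suc M}. - w i = 0"
      using sum_nonneg_eq_0_iff[of "{..<Suc M}" "\<lambda>i. - w i"] by blast
    then show False using w_nz[of 0] by simp
  qed
  \<comment> \<open>move along the kernel direction w until the first weight hits zero\<close>
  define \<theta> where "\<theta> = Min ((\<lambda>i. l i / w i) ` P)"
  have "\<theta> \<in> (\<lambda>i. l i / w i) ` P"
    unfolding \<theta>_def using \<open>P \<noteq> {}\<close> by (intro Min_in) (auto simp: P_def)
  then obtain i0 where i0: "i0 \<in> P" "\<theta> = l i0 / w i0" by auto
  have \<theta>_le: "\<theta> \<le> l i / w i" if "i \<in> P" for i
    unfolding \<theta>_def using that by (intro Min_le) (auto simp: P_def)
  have "\<theta> \<ge> 0" using i0 atoms by (auto simp: P_def atoms_in_def)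
  define l' where "l' i = l i - \<theta> * w i" for i
  have "0 \<le> l' i" if "i < Suc M" for i
  proof (cases "w i > 0")
    case True
    then show ?thesis
      using \<theta>_le[of i] that by (simp add: l'_def P_def le_divide_eq)
  next
    case False
    then have "\<theta> * w i \<le> 0" using \<open>\<theta> \<ge> 0\<close> by (simp add: mult_nonneg_nonpos)
    moreover have "0 \<le> l i" using atoms that by (simp add: atoms_in_def)
    ultimately show ?thesis by (simp add: l'_def)
  qed
  moreover have "atoms_moment t l' (Suc M) j = atoms_moment t l (Suc M) j" if "j < M" for j
  proof -
    have "atoms_moment t l' (Suc M) j = atoms_moment t l (Suc M) j - \<theta> * (\<Sum>i<Suc M. w i * t i ^ j)"
      by (simp add: atoms_moment_def l'_def algebra_simps sum_subtractf sum_distrib_left)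
    then show ?thesis using w_kernel[OF that] by simp
  qed
  moreover have "l' i0 = 0" using i0 by (simp add: P_def l'_def)
  ultimately show ?thesis
    using atoms i0 by (intro exI[of _ l']) (auto simp: atoms_in_def P_def)
qed

lemma atoms_reduce:
  assumes atoms: "atoms_in a b (Suc M) t l" and "0 < M"
  shows "\<exists>t' l'. atoms_in a b M t' l' \<and> (\<forall>j<M. atoms_moment t' l' M j = atoms_moment t l (Suc M) j)"
proof -
  obtain l' i where l': "atoms_in a b (Suc M) t l'" "i < Suc M" "l' i = 0"
    and mom: "\<forall>j<M. atoms_moment t l' (Suc M) j = atoms_moment t l (Suc M) j"
  proof (cases "inj_on t {..M}")
    case True
    then show ?thesis using atoms_kill_weight[OF atoms True \<open>0 < M\<close>] that by blast
  next
    case False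
    then obtain i k where "i < Suc M" "k < Suc M" "i \<noteq> k" "t i = t k"
      by (auto simp: inj_on_def less_Suc_eq_le)
    then show ?thesis using atoms_merge_equal_nodes[OF atoms] that by fastforce
  qed
  then show ?thesis using atoms_drop_zero_weight[OF l'] by metis
qed

lemma bounded_family_convergent_subseq:
  fixes X :: "nat \<Rightarrow> nat \<Rightarrow> real"
  assumes "\<forall>k i. i < M \<longrightarrow> \<bar>X k i\<bar> \<le> B"
  shows "\<exists>r. strict_mono r \<and> (\<forall>i<M. convergent (\<lambda>k. X (r k) i))"
  using assms
proof (induction M)
  case 0
  then show ?case by (intro exI[of _ id]) (auto simp: strict_mono_def)
next
  case (Suc M)
  then obtain r where r: "strict_mono r" "\<forall>i<M. convergent (\<lambda>k. X (r k) i)" by auto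
  have "bounded (range (\<lambda>k. X (r k) M))"
    using Suc.prems by (auto simp: bounded_iff intro!: exI[of _ B])
  then obtain c r' where "strict_mono r'" "((\<lambda>k. X (r k) M) \<circ> r') \<longlonglongrightarrow> c"
    using bounded_imp_convergent_subsequence by blast
  then have r': "strict_mono r'" "convergent (\<lambda>k. X (r (r' k)) M)"
    by (auto simp: convergent_def o_def)
  show ?case
  proof (intro exI[of _ "r \<circ> r'"] conjI allI impI)
    show "strict_mono (r \<circ> r')" using r r' by (simp add: strict_mono_o)
    fix i assume "i < Suc M"
    then show "convergent (\<lambda>k. X ((r \<circ> r') k) i)"
      using r' r convergent_subseq_convergent[of "\<lambda>k. X (r k) i" r']
      by (auto simp: less_Suc_eq o_def)
  qed
qed

lemma atoms_convergent_subseq: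
  fixes T L :: "nat \<Rightarrow> nat \<Rightarrow> real"
  assumes "\<And>k. atoms_in a b M (T k) (L k)" "\<And>k i. i < M \<Longrightarrow> L k i \<le> B"
  shows "\<exists>r t l. strict_mono r \<and> atoms_in a b M t l
    \<and> (\<forall>j. (\<lambda>k. atoms_moment (T (r k)) (L (r k)) M j) \<longlonglongrightarrow> atoms_moment t l M j)"
proof -
  have "\<bar>T k i\<bar> \<le> \<bar>a\<bar> + \<bar>b\<bar> \<and> \<bar>L k i\<bar> \<le> \<bar>B\<bar>" if "i < M" for k i
    using assms(1)[of k] assms(2)[of i k] that unfolding atoms_in_def by force
  then obtain r1 where r1: "strict_mono r1" "\<forall>i<M. convergent (\<lambda>k. T (r1 k) i)"
    and "\<forall>k i. i < M \<longrightarrow> \<bar>L (r1 k) i\<bar> \<le> \<bar>B\<bar>"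
    using bounded_family_convergent_subseq[of M T] by blast
  then obtain r2 where r2: "strict_mono r2" "\<forall>i<M. convergent (\<lambda>k. L (r1 (r2 k)) i)"
    using bounded_family_convergent_subseq[of M "\<lambda>k. L (r1 k)"] by blast
  define r where "r = r1 \<circ> r2"
  define t where "t i = lim (\<lambda>k. T (r k) i)" for i
  define l where "l i = lim (\<lambda>k. L (r k) i)" for i
  have T: "(\<lambda>k. T (r k) i) \<longlonglongrightarrow> t i" and L: "(\<lambda>k. L (r k) i) \<longlonglongrightarrow> l i" if "i < M" for i
    using that r1 r2 convergent_subseq_convergent[of "\<lambda>k. T (r1 k) i" r2]
    by (auto simp: r_def t_def l_def o_def convergent_LIMSEQ_iff)
  have "atoms_in a b M t l"
    unfolding atoms_in_def
  proof (intro allI impI conjI)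
    fix i assume i: "i < M"
    have "a \<le> T (r k) i" "T (r k) i \<le> b" "0 \<le> L (r k) i" for k
      using assms(1)[of "r k"] i by (auto simp: atoms_in_def)
    then show "a \<le> t i" "t i \<le> b" "0 \<le> l i"
      using T[OF i] L[OF i] by (auto intro: LIMSEQ_le_const LIMSEQ_le_const2)
  qed
  moreover have "(\<lambda>k. atoms_moment (T (r k)) (L (r k)) M j) \<longlonglongrightarrow> atoms_moment t l M j" for j
    unfolding atoms_moment_def by (intro tendsto_intros) (auto simp: T L)
  moreover have "strict_mono r" using r1 r2 by (simp add: r_def strict_mono_o)
  ultimately show ?thesis by blast
qed

lemma atoms_weight_le:
  assumes "atoms_in a b M t l" "i < M" "(atoms_moment t l M 0 - c)\<^sup>2 \<le> E"
  shows "l i \<le> \<bar>c\<bar> + E + 1"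
proof -
  define z where "z = atoms_moment t l M 0 - c"
  have "z \<le> E + 1"
  proof (cases "z \<le> 1")
    case False
    then have "z * 1 \<le> z * z" by (intro mult_left_mono) auto
    then show ?thesis using assms(3) by (simp add: z_def power2_eq_square)
  next
    case True
    moreover have "0 \<le> E" using assms(3) zero_le_power2 order_trans by blast
    ultimately show ?thesis by simp
  qed
  moreover have "l i \<le> atoms_moment t l M 0"
    using assms(1,2) unfolding atoms_moment_def atoms_in_def
    by (simp, intro member_le_sum) auto
  ultimately show ?thesis by (simp add: z_def)
qed

lemma atoms_nearest_moments:
  fixes v :: "nat \<Rightarrow> real"
  assumes "a \<le> b"
  shows "\<exists>t l. atoms_in a b M t l \<and> (\<forall>t' l'. atoms_in a b M t' l' \<longrightarrow>
    (\<Sum>j\<le>m. (v j - atoms_moment t l M j)\<^sup>2) \<le> (\<Sum>j\<le>m. (v j - atoms_moment t' l' M j)\<^sup>2))"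
proof -
  define D where "D t l = (\<Sum>j\<le>m. (v j - atoms_moment t l M j)\<^sup>2)" for t l
  define A where "A = {D t l | t l. atoms_in a b M t l}"
  define d where "d = Inf A"
  have "D (\<lambda>_. a) (\<lambda>_. 0) \<in> A" using assms by (auto simp: A_def atoms_in_def)
  moreover have D_nonneg: "0 \<le> D t l" for t l unfolding D_def by (simp add: sum_nonneg)
  ultimately have "A \<noteq> {}" and "bdd_below A" by (auto simp: A_def intro: bdd_belowI[of _ 0])
  then have d_le: "d \<le> D t l" if "atoms_in a b M t l" for t l
    unfolding d_def using that by (intro cInf_lower) (auto simp: A_def)
  have "\<exists>t l. atoms_in a b M t l \<and> D t l < d + inverse (real (Suc k))" for k
    using cInf_lessD[OF \<open>A \<noteq> {}\<close>, of "d + inverse (real (Suc k))"] by (auto simp: d_def A_def)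
  then obtain T L where TL: "\<And>k. atoms_in a b M (T k) (L k)"
    and D_TL: "\<And>k. D (T k) (L k) < d + inverse (real (Suc k))"
    by metis
  have weight_bound: "L k i \<le> \<bar>v 0\<bar> + (d + 1) + 1" if "i < M" for k i
  proof (rule atoms_weight_le[OF TL that])
    have "(atoms_moment (T k) (L k) M 0 - v 0)\<^sup>2 \<le> D (T k) (L k)"
      unfolding D_def power2_commute[of _ "v _"] by (rule member_le_sum) auto
    also have "\<dots> \<le> d + 1"
      using D_TL[of k] inverse_le_1_iff[of "real (Suc k)"] by simp
    finally show "(atoms_moment (T k) (L k) M 0 - v 0)\<^sup>2 \<le> d + 1" .
  qed
  obtain r t l where r: "strict_mono r" and tl: "atoms_in a b M t l"
    and lim: "\<forall>j. (\<lambda>k. atoms_moment (T (r k)) (L (r k)) M j) \<longlonglongrightarrow> atoms_moment t l M j"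
    using atoms_convergent_subseq[where T = T and L = L, OF TL weight_bound] by blast
  have "D t l \<le> d"
  proof (rule LIMSEQ_le)
    show "(\<lambda>k. D (T (r k)) (L (r k))) \<longlonglongrightarrow> D t l"
      unfolding D_def by (intro tendsto_intros lim[rule_format])
    show "(\<lambda>k. d + inverse (real (Suc k))) \<longlonglongrightarrow> d"
      using tendsto_add[OF tendsto_const LIMSEQ_inverse_real_of_nat] by simp
    have "D (T (r k)) (L (r k)) \<le> d + inverse (real (Suc k))" for k
    proof -
      have "inverse (real (Suc (r k))) \<le> inverse (real (Suc k))"
        using seq_suble[OF r, of k] by (simp add: le_imp_inverse_le)
      then show ?thesis using D_TL[of "r k"] by linarith
    qed
    then show "\<exists>N. \<forall>k\<ge>N. D (T (r k)) (L (r k)) \<le> d + inverse (real (Suc k))" by blast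
  qed
  then show ?thesis using tl d_le unfolding D_def by force
qed

lemma sum_mult_nonpos_of_sum_squares_min:
  fixes e y :: "nat \<Rightarrow> real"
  assumes "\<And>\<epsilon>. 0 < \<epsilon> \<Longrightarrow> \<epsilon> < 1 \<Longrightarrow> (\<Sum>j\<in>J. (e j)\<^sup>2) \<le> (\<Sum>j\<in>J. (e j - \<epsilon> * y j)\<^sup>2)"
  shows "(\<Sum>j\<in>J. e j * y j) \<le> 0"
proof (rule tendsto_lowerbound)
  show "((\<lambda>\<epsilon>. \<epsilon> * (\<Sum>j\<in>J. (y j)\<^sup>2) / 2) \<longlongrightarrow> 0) (at_right 0)"
    by (auto intro!: tendsto_eq_intros)
  have "(\<Sum>j\<in>J. e j * y j) \<le> \<epsilon> * (\<Sum>j\<in>J. (y j)\<^sup>2) / 2" if "0 < \<epsilon>" "\<epsilon> < 1" for \<epsilon>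
  proof -
    have "(\<Sum>j\<in>J. (e j - \<epsilon> * y j)\<^sup>2)
        = (\<Sum>j\<in>J. (e j)\<^sup>2) - 2 * \<epsilon> * (\<Sum>j\<in>J. e j * y j) + \<epsilon>\<^sup>2 * (\<Sum>j\<in>J. (y j)\<^sup>2)"
      by (simp add: power2_diff sum.distrib sum_subtractf sum_distrib_left algebra_simps
          power_mult_distrib)
    then have "\<epsilon> * (2 * (\<Sum>j\<in>J. e j * y j)) \<le> \<epsilon> * (\<epsilon> * (\<Sum>j\<in>J. (y j)\<^sup>2))"
      using assms[OF that] by (simp add: power2_eq_square algebra_simps)
    then show ?thesis using \<open>0 < \<epsilon>\<close> by simp
  qed
  then show "\<forall>\<^sub>F \<epsilon> in at_right 0. (\<Sum>j\<in>J. e j * y j) \<le> \<epsilon> * (\<Sum>j\<in>J. (y j)\<^sup>2) / 2"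
    by (intro eventually_at_rightI[of 0 1]) auto
qed simp

lemma atoms_nearest_add_atom:
  fixes v :: "nat \<Rightarrow> real" and m :: nat
  defines "e \<equiv> \<lambda>t l j. v j - atoms_moment t l (Suc m) j"
  assumes atoms: "atoms_in a b (Suc m) t l"
    and nearest: "\<And>t' l'. atoms_in a b (Suc m) t' l'
                    \<Longrightarrow> (\<Sum>j\<le>m. (e t l j)\<^sup>2) \<le> (\<Sum>j\<le>m. (e t' l' j)\<^sup>2)"
  shows "\<forall>x\<in>{a..b}. (\<Sum>j\<le>m. e t l j * x ^ j) \<le> 0"
proof
  fix x :: real assume x: "x \<in> {a..b}"
  show "(\<Sum>j\<le>m. e t l j * x ^ j) \<le> 0"
  proof (rule sum_mult_nonpos_of_sum_squares_min)
    \<comment> \<open>adding an atom at x and reducing back to m + 1 atoms cannot get closer to v\<close>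
    fix \<epsilon> :: real assume "0 < \<epsilon>" "\<epsilon> < 1"
    then have "atoms_in a b (Suc (Suc m)) (t(Suc m := x)) (l(Suc m := \<epsilon>))"
      using atoms x by (auto simp: atoms_in_def less_Suc_eq)
    then obtain t' l' where t'l': "atoms_in a b (Suc m) t' l'" and mom:
      "\<forall>j<Suc m. atoms_moment t' l' (Suc m) j
         = atoms_moment (t(Suc m := x)) (l(Suc m := \<epsilon>)) (Suc (Suc m)) j"
      using atoms_reduce by blast
    have "(\<Sum>j\<le>m. (e t' l' j)\<^sup>2) = (\<Sum>j\<le>m. (e t l j - \<epsilon> * x ^ j)\<^sup>2)"
      using mom by (intro sum.cong refl) (simp add: e_def atoms_moment_def algebra_simps)
    then show "(\<Sum>j\<le>m. (e t l j)\<^sup>2) \<le> (\<Sum>j\<le>m. (e t l j - \<epsilon> * x ^ j)\<^sup>2)"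
      using nearest[OF t'l'] by simp
  qed
qed

lemma atoms_nearest_orthogonal:
  fixes v :: "nat \<Rightarrow> real" and m :: nat
  defines "e \<equiv> \<lambda>t l j. v j - atoms_moment t l (Suc m) j"
  assumes atoms: "atoms_in a b (Suc m) t l"
    and nearest: "\<And>t' l'. atoms_in a b (Suc m) t' l'
                    \<Longrightarrow> (\<Sum>j\<le>m. (e t l j)\<^sup>2) \<le> (\<Sum>j\<le>m. (e t' l' j)\<^sup>2)"
  shows "(\<Sum>j\<le>m. e t l j * atoms_moment t l (Suc m) j) = 0"
proof -
  have "(\<Sum>j\<le>m. e t l j * (\<sigma> * atoms_moment t l (Suc m) j)) \<le> 0" if "\<bar>\<sigma>\<bar> = 1" for \<sigma> :: real
  proof (rule sum_mult_nonpos_of_sum_squares_min)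
    \<comment> \<open>rescaling all weights by 1 \<plusminus> \<epsilon> cannot get closer to v\<close>
    fix \<epsilon> :: real assume "0 < \<epsilon>" "\<epsilon> < 1"
    then have "atoms_in a b (Suc m) t (\<lambda>i. (1 + \<epsilon> * \<sigma>) * l i)"
      using atoms that by (auto simp: atoms_in_def abs_if split: if_splits)
    then have "(\<Sum>j\<le>m. (e t l j)\<^sup>2) \<le> (\<Sum>j\<le>m. (e t (\<lambda>i. (1 + \<epsilon> * \<sigma>) * l i) j)\<^sup>2)"
      by (rule nearest)
    moreover have "e t (\<lambda>i. (1 + \<epsilon> * \<sigma>) * l i) j = e t l j - \<epsilon> * (\<sigma> * atoms_moment t l (Suc m) j)" for j
      by (simp add: e_def atoms_moment_def sum_distrib_left algebra_simps sum.distrib)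
    ultimately show "(\<Sum>j\<le>m. (e t l j)\<^sup>2) \<le> (\<Sum>j\<le>m. (e t l j - \<epsilon> * (\<sigma> * atoms_moment t l (Suc m) j))\<^sup>2)"
      by simp
  qed
  from this[of 1] this[of "-1"] show ?thesis by (simp add: sum_negf)
qed

lemma atoms_to_atomic_moments:
  assumes "atoms_in a b M t l"
  obtains S w where "finite S" "S \<subseteq> {a..b}" "\<forall>x\<in>S. w x > 0"
    "\<And>j. (\<Sum>x\<in>S. w x * x ^ j) = atoms_moment t l M j"
proof
  define I where "I = {i. i < M \<and> l i > 0}"
  show "finite (t ` I)" by (simp add: I_def)
  show "t ` I \<subseteq> {a..b}" using assms by (auto simp: I_def atoms_in_def)
  show "\<forall>x\<in>t ` I. sum l {i\<in>I. t i = x} > 0"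
    by (auto simp: I_def intro!: sum_pos2)
  fix j
  have "atoms_moment t l M j = (\<Sum>i\<in>I. l i * t i ^ j)"
    unfolding atoms_moment_def using assms
    by (intro sum.mono_neutral_right) (auto simp: I_def atoms_in_def order.order_iff_strict)
  also have "\<dots> = (\<Sum>x\<in>t ` I. \<Sum>i\<in>{i\<in>I. t i = x}. l i * t i ^ j)"
    by (rule sum.image_gen) (simp add: I_def)
  also have "\<dots> = (\<Sum>x\<in>t ` I. sum l {i\<in>I. t i = x} * x ^ j)"
    by (intro sum.cong refl) (simp add: sum_distrib_right)
  finally show "(\<Sum>x\<in>t ` I. sum l {i\<in>I. t i = x} * x ^ j) = atoms_moment t l M j" by simp
qed

theorem positive_on_imp_atomic_moments:
  assumes pos: "positive_on v a b" and "a \<le> b"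
  obtains S w where "finite S" "S \<subseteq> {a..b}" "\<forall>x\<in>S. w x > 0" "atomic_moments S w v"
proof (cases "v = []")
  case True
  then show ?thesis using that[of "{}"] by (simp add: atomic_moments_def)
next
  case False
  then obtain m where len: "length v = Suc m" by (metis length_Suc_conv list.exhaust)
  obtain t l where atoms: "atoms_in a b (Suc m) t l" and
    nearest: "\<And>t' l'. atoms_in a b (Suc m) t' l' \<Longrightarrow>
      (\<Sum>j\<le>m. (v ! j - atoms_moment t l (Suc m) j)\<^sup>2)
        \<le> (\<Sum>j\<le>m. (v ! j - atoms_moment t' l' (Suc m) j)\<^sup>2)"
    using atoms_nearest_moments[OF \<open>a \<le> b\<close>, of "Suc m" "\<lambda>j. v ! j" m] by blast
  \<comment> \<open>e is the residual of the best approximation of v; positivity applied to the polynomial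
      -\<Sum>j\<le>m. e j x^j, which is nonnegative on [a, b], forces e = 0\<close>
  define e where "e j = v ! j - atoms_moment t l (Suc m) j" for j
  note below = atoms_nearest_add_atom[of a b m t l "\<lambda>j. v ! j", OF atoms nearest, folded e_def]
  note orth = atoms_nearest_orthogonal[of a b m t l "\<lambda>j. v ! j", OF atoms nearest, folded e_def]
  define p where "p = (\<Sum>j\<le>m. monom (- e j) j)"
  have coeff_p: "coeff p j = (if j \<le> m then - e j else 0)" for j
    by (simp add: p_def coeff_sum)
  have "0 \<le> moment_functional v p"
  proof (rule pos[unfolded positive_on_def, rule_format])
    show "degree p + 1 \<le> length v"
      using len coeff_p by (simp add: degree_le)
    show "0 \<le> poly p x" if "x \<in> {a..b}" for x
      using below that by (simp add: p_def poly_sum poly_monom sum_negf)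
  qed
  also have "moment_functional v p = - (\<Sum>j\<le>m. e j * v ! j)"
    by (simp add: moment_functional_def len coeff_p lessThan_Suc_atMost sum_negf)
  also have "\<dots> = - (\<Sum>j\<le>m. e j * (e j + atoms_moment t l (Suc m) j))"
    by (simp add: e_def)
  also have "\<dots> = - (\<Sum>j\<le>m. (e j)\<^sup>2)"
    using orth by (simp add: algebra_simps sum.distrib power2_eq_square)
  finally have "(\<Sum>j\<le>m. (e j)\<^sup>2) = 0"
    using sum_nonneg[of "{..m}" "\<lambda>j. (e j)\<^sup>2"] by simp
  then have "\<forall>j\<le>m. e j = 0" by (simp add: sum_nonneg_eq_0_iff)
  then have "atoms_moment t l (Suc m) j = v ! j" if "j < length v" for j
    using that len by (simp add: e_def)
  with atoms_to_atomic_moments[OF atoms] show ?thesis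
    using that by (metis atomic_moments_def)
qed

lemma t1_le_of_positive_on_Cons:
  assumes "positive_on (c # u) a b" "0 < a" "a < b" "b \<le> 1"
  shows "t1 u \<le> ereal c"
proof -
  obtain S w where S: "finite S" "S \<subseteq> {a..b}" "\<forall>x\<in>S. w x > 0" "atomic_moments S w (c # u)"
    by (rule positive_on_imp_atomic_moments[OF assms(1) order.strict_implies_order[OF assms(3)]])
  have S_pos: "0 < x" if "x \<in> S" for x using S(2) assms(2) that by force
  \<comment> \<open>x w(x) represents u, and its integral of 1/x is the zeroth moment c\<close>
  have "\<forall>x\<in>S. w x * x \<ge> 0" using S(3) S_pos by (simp add: less_imp_le)
  moreover have "atomic_moments S (\<lambda>x. w x * x) u"
    using atomic_moments_drop[OF S(4), of 1] by simp
  ultimately have "t1 u \<le> ereal (\<Sum>x\<in>S. w x * x / x)"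
    by (rule t1_le_atomic[OF S(1,2) assms(2-4)])
  also have "(\<Sum>x\<in>S. w x * x / x) = (\<Sum>x\<in>S. w x)"
    using S_pos by (intro sum.cong) auto
  also have "\<dots> = c" using S(4)[unfolded atomic_moments_def, rule_format, of 0] by simp
  finally show ?thesis .
qed

lemma poly_pos_left_right:
  fixes q :: "real poly"
  assumes "0 < poly q x" "a < x" "x < b"
  shows "\<exists>y\<in>{a<..<x}. 0 < poly q y" and "\<exists>y\<in>{x<..<b}. 0 < poly q y"
proof -
  have "(poly q \<longlongrightarrow> poly q x) (at x)" by (rule isContD) (rule poly_isCont)
  then have lim: "(poly q \<longlongrightarrow> poly q x) (at_left x)" "(poly q \<longlongrightarrow> poly q x) (at_right x)"
    by (auto simp: filterlim_at_split)
  have "\<forall>\<^sub>F y in at_left x. y \<in> {a<..<x} \<and> 0 < poly q y"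
    using assms by (intro eventually_conj eventually_at_leftI[of a] order_tendstoD(1)[OF lim(1)]) auto
  then show "\<exists>y\<in>{a<..<x}. 0 < poly q y"
    by (metis (mono_tags) eventually_happens' trivial_limit_at_left_real)
  have "\<forall>\<^sub>F y in at_right x. y \<in> {x<..<b} \<and> 0 < poly q y"
    using assms by (intro eventually_conj eventually_at_rightI[of _ b] order_tendstoD(1)[OF lim(2)]) auto
  then show "\<exists>y\<in>{x<..<b}. 0 < poly q y"
    by (metis (mono_tags) eventually_happens' trivial_limit_at_right_real)
qed

lemma poly_nonneg_interior_root_double:
  fixes p :: "real poly"
  assumes nonneg: "\<forall>y\<in>{a..b}. poly p y \<ge> 0" and x: "a < x" "x < b" and root: "poly p x = 0"
  obtains h where "p = [:-x, 1:]^2 * h" "\<forall>y\<in>{a..b}. poly h y \<ge> 0"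
proof -
  obtain g where g: "p = [:-x, 1:] * g" using root by (metis dvdE poly_eq_0_iff_dvd)
  have "poly g x = 0"
  proof (rule ccontr)
    assume "poly g x \<noteq> 0"
    then consider "0 < poly g x" | "0 < poly (- g) x" by fastforce
    then obtain y where "y \<in> {a..b}" "(y - x) * poly g y < 0"
    proof cases
      case 1
      then obtain y where "y \<in> {a<..<x}" "0 < poly g y" using poly_pos_left_right(1)[OF 1 x] by blast
      then show ?thesis using that[of y] x by (simp add: mult_neg_pos)
    next
      case 2
      then obtain y where "y \<in> {x<..<b}" "0 < poly (- g) y" using poly_pos_left_right(2)[OF 2 x] by blast
      then show ?thesis using that[of y] x by (simp add: mult_pos_neg)
    qed
    moreover have "poly p y = (y - x) * poly g y" for y by (simp add: g algebra_simps)
    ultimately show False using nonneg by (metis linorder_not_le)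
  qed
  then obtain h where h: "g = [:-x, 1:] * h" by (metis dvdE poly_eq_0_iff_dvd)
  then have p: "p = [:-x, 1:]^2 * h" by (simp only: g power2_eq_square mult.assoc)
  have h_nonneg: "poly h y \<ge> 0" if "y \<in> {a..b}" "y \<noteq> x" for y
    using nonneg that unfolding p by (auto simp: zero_le_mult_iff)
  moreover have "poly h x \<ge> 0"
  proof (rule ccontr)
    assume "\<not> poly h x \<ge> 0"
    then obtain y where "y \<in> {x<..<b}" "0 < poly (- h) y"
      using poly_pos_left_right(2)[of "- h", OF _ x] by fastforce
    then show False using h_nonneg[of y] x by auto
  qed
  ultimately show ?thesis using that p by (metis atLeastAtMost_iff)
qed

lemma poly_nonneg_vanishing_eq_0:
  fixes p :: "real poly"
  assumes "finite F" "F \<subseteq> {a<..<1}" "\<forall>y\<in>{a..1}. poly p y \<ge> 0" "\<forall>x\<in>F. poly p x = 0"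
    "e \<longrightarrow> poly p 1 = 0" "degree p < 2 * card F + (if e then 1 else 0)"
  shows "p = 0"
  using assms
proof (induction F arbitrary: p rule: finite_induct)
  case empty
  then have "e" "degree p = 0" by (auto split: if_splits)
  then show ?case using empty.prems(4) by (auto elim: degree_eq_zeroE)
next
  case (insert x F)
  then have x: "a < x" "x < 1" by auto
  obtain h where p: "p = [:-x, 1:]^2 * h" and h_nonneg: "\<forall>y\<in>{a..1}. poly h y \<ge> 0"
    using poly_nonneg_interior_root_double[OF insert.prems(2) x] insert.prems(3) by auto
  show ?case
  proof (cases "h = 0")
    case False
    have "h = 0"
    proof (rule insert.IH)
      show "\<forall>z\<in>F. poly h z = 0" using insert.prems(3) insert.hyps(2) by (auto simp: p)
      show "e \<longrightarrow> poly h 1 = 0" using insert.prems(4) x by (simp add: p)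
      show "degree h < 2 * card F + (if e then 1 else 0)"
        using insert.prems(5) insert.hyps False by (simp add: p degree_mult_eq degree_power_eq)
    qed (use insert.prems h_nonneg in auto)
    with False show ?thesis ..
  qed (simp add: p)
qed

definition twice_ind1 :: "real set \<Rightarrow> nat" where
  "twice_ind1 S = 2 * card (S \<inter> {0<..<1}) + (if 1 \<in> S then 1 else 0)"

lemma atomic_functional_pos:
  fixes p :: "real poly"
  assumes S: "finite S" "S \<subseteq> {a<..1}" "0 \<le> a" "\<forall>x\<in>S. \<omega> x > 0"
    and p: "p \<noteq> 0" "degree p < twice_ind1 S" "\<forall>y\<in>{a..1}. poly p y \<ge> 0"
  shows "0 < (\<Sum>x\<in>S. \<omega> x * poly p x)"
proof -
  have terms_nonneg: "0 \<le> \<omega> x * poly p x" if "x \<in> S" for x using S p(3) that by force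
  have "\<not> (\<forall>x\<in>S. \<omega> x * poly p x = 0)"
  proof
    assume "\<forall>x\<in>S. \<omega> x * poly p x = 0"
    then have roots: "\<forall>x\<in>S. poly p x = 0" using S(4) by force
    have "p = 0"
    proof (rule poly_nonneg_vanishing_eq_0)
      show "finite (S \<inter> {0<..<1})" "S \<inter> {0<..<1} \<subseteq> {a<..<1}" using S by auto
      show "degree p < 2 * card (S \<inter> {0<..<1}) + (if 1 \<in> S then 1 else 0)"
        using p(2) by (simp add: twice_ind1_def)
    qed (use roots p(3) in auto)
    with p(1) show False ..
  qed
  then have "(\<Sum>x\<in>S. \<omega> x * poly p x) \<noteq> 0"
    using S(1) terms_nonneg by (simp add: sum_nonneg_eq_0_iff)
  moreover have "0 \<le> (\<Sum>x\<in>S. \<omega> x * poly p x)" by (intro sum_nonneg terms_nonneg)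
  ultimately show ?thesis by simp
qed

lemma poly_bounded_coeffs_convergent_subseq:
  fixes Q :: "nat \<Rightarrow> real poly"
  assumes deg: "\<And>k. degree (Q k) \<le> L" and bound: "\<And>k j. \<bar>coeff (Q k) j\<bar> \<le> 1"
  shows "\<exists>r p. strict_mono r \<and> degree p \<le> L
    \<and> (\<forall>j. (\<lambda>k. coeff (Q (r k)) j) \<longlonglongrightarrow> coeff p j)
    \<and> (\<forall>y. (\<lambda>k. poly (Q (r k)) y) \<longlonglongrightarrow> poly p y)"
proof -
  have "\<forall>k j. j < Suc L \<longrightarrow> \<bar>coeff (Q k) j\<bar> \<le> 1" using bound by blast
  from bounded_family_convergent_subseq[OF this]
  obtain r where r: "strict_mono r" "\<forall>j<Suc L. convergent (\<lambda>k. coeff (Q (r k)) j)"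
    by blast
  define p where "p = (\<Sum>j\<le>L. monom (lim (\<lambda>k. coeff (Q (r k)) j)) j)"
  have coeff_p: "coeff p j = (if j \<le> L then lim (\<lambda>k. coeff (Q (r k)) j) else 0)" for j
    by (simp add: p_def coeff_sum)
  have coeff_lim: "(\<lambda>k. coeff (Q (r k)) j) \<longlonglongrightarrow> coeff p j" for j
  proof (cases "j \<le> L")
    case True
    then show ?thesis using r(2) by (simp add: coeff_p convergent_LIMSEQ_iff)
  next
    case False
    then have "coeff (Q (r k)) j = 0" for k using deg[of "r k"] by (simp add: coeff_eq_0)
    then show ?thesis using False by (simp add: coeff_p)
  qed
  have "degree p \<le> L" by (rule degree_le) (simp add: coeff_p)
  have poly_lim: "(\<lambda>k. poly (Q (r k)) y) \<longlonglongrightarrow> poly p y" for y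
  proof -
    have vanish: "\<forall>j\<ge>Suc L. coeff q j = 0" if "degree q \<le> L" for q :: "real poly"
      using that by (simp add: coeff_eq_0)
    show ?thesis
      unfolding poly_eq_sum_lessThan[OF vanish[OF deg]] poly_eq_sum_lessThan[OF vanish[OF \<open>degree p \<le> L\<close>]]
      by (intro tendsto_intros coeff_lim)
  qed
  show ?thesis using r(1) \<open>degree p \<le> L\<close> coeff_lim poly_lim by blast
qed

lemma atomic_functional_normalized_bound:
  fixes \<omega> :: "real \<Rightarrow> real"
  assumes S: "finite S" "S \<subseteq> {a<..1}" "0 \<le> a" "\<forall>x\<in>S. \<omega> x > 0" and "L < twice_ind1 S"
  shows "\<exists>\<delta>>0. \<forall>p. degree p \<le> L \<longrightarrow> (\<forall>y\<in>{a..1}. poly p y \<ge> 0) \<longrightarrow>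
    (\<Sum>j\<le>L. \<bar>coeff p j\<bar>) = 1 \<longrightarrow> \<delta> \<le> (\<Sum>x\<in>S. \<omega> x * poly p x)"
proof (rule ccontr)
  define \<Phi> where "\<Phi> p = (\<Sum>x\<in>S. \<omega> x * poly p x)" for p
  define \<sigma> where "\<sigma> p = (\<Sum>j\<le>L. \<bar>coeff p j\<bar>)" for p :: "real poly"
  assume "\<not> ?thesis"
  then have "\<exists>q. degree q \<le> L \<and> (\<forall>y\<in>{a..1}. poly q y \<ge> 0) \<and> \<sigma> q = 1 \<and> \<Phi> q < inverse (real (Suc k))"
    for k
    by (force simp: \<Phi>_def \<sigma>_def not_le dest: spec[of _ "inverse (real (Suc k))"])
  then obtain Q where deg_Q: "\<And>k. degree (Q k) \<le> L"
    and Q_nonneg: "\<And>k. \<forall>y\<in>{a..1}. poly (Q k) y \<ge> 0"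
    and \<sigma>_Q: "\<And>k. \<sigma> (Q k) = 1" and \<Phi>_Q: "\<And>k. \<Phi> (Q k) < inverse (real (Suc k))"
    by metis
  have coeff_Q: "\<bar>coeff (Q k) j\<bar> \<le> 1" for k j
  proof (cases "j \<le> L")
    case True
    then show ?thesis using \<sigma>_Q[of k] member_le_sum[of j "{..L}" "\<lambda>j. \<bar>coeff (Q k) j\<bar>"]
      by (simp add: \<sigma>_def)
  qed (use deg_Q[of k] in \<open>simp add: coeff_eq_0\<close>)
  obtain r p where r: "strict_mono r" and "degree p \<le> L"
    and coeff_lim: "\<forall>j. (\<lambda>k. coeff (Q (r k)) j) \<longlonglongrightarrow> coeff p j"
    and poly_lim: "\<forall>y. (\<lambda>k. poly (Q (r k)) y) \<longlonglongrightarrow> poly p y"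
    using poly_bounded_coeffs_convergent_subseq[where Q = Q, OF deg_Q coeff_Q] by blast
  have "(\<lambda>k. \<sigma> (Q (r k))) \<longlonglongrightarrow> \<sigma> p"
    unfolding \<sigma>_def by (intro tendsto_intros coeff_lim[rule_format])
  then have "\<sigma> p = 1" using \<sigma>_Q by (simp add: LIMSEQ_const_iff)
  then have "p \<noteq> 0" by (auto simp: \<sigma>_def)
  have p_nonneg: "\<forall>y\<in>{a..1}. poly p y \<ge> 0"
    using Q_nonneg by (auto intro: LIMSEQ_le_const[OF poly_lim[rule_format]])
  have "\<Phi> p \<le> 0"
  proof (rule LIMSEQ_le)
    show "(\<lambda>k. \<Phi> (Q (r k))) \<longlonglongrightarrow> \<Phi> p"
      unfolding \<Phi>_def by (intro tendsto_intros poly_lim[rule_format])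
    show "(\<lambda>k. inverse (real (Suc k))) \<longlonglongrightarrow> 0" by (rule LIMSEQ_inverse_real_of_nat)
    have "\<Phi> (Q (r k)) \<le> inverse (real (Suc k))" for k
    proof -
      have "inverse (real (Suc (r k))) \<le> inverse (real (Suc k))"
        using seq_suble[OF r, of k] by (simp add: le_imp_inverse_le)
      then show ?thesis using \<Phi>_Q[of "r k"] by linarith
    qed
    then show "\<exists>N. \<forall>k\<ge>N. \<Phi> (Q (r k)) \<le> inverse (real (Suc k))" by blast
  qed
  moreover have "0 < \<Phi> p"
    unfolding \<Phi>_def using atomic_functional_pos[OF S \<open>p \<noteq> 0\<close> _ p_nonneg]
      \<open>degree p \<le> L\<close> \<open>L < twice_ind1 S\<close> by simp
  ultimately show False by simp
qed

lemma atomic_functional_margin: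
  fixes \<omega> :: "real \<Rightarrow> real"
  assumes "finite S" "S \<subseteq> {a<..1}" "0 \<le> a" "\<forall>x\<in>S. \<omega> x > 0" "L < twice_ind1 S"
  shows "\<exists>\<delta>>0. \<forall>p. degree p \<le> L \<longrightarrow> (\<forall>y\<in>{a..1}. poly p y \<ge> 0) \<longrightarrow>
    \<delta> * (\<Sum>j\<le>L. \<bar>coeff p j\<bar>) \<le> (\<Sum>x\<in>S. \<omega> x * poly p x)"
proof -
  obtain \<delta> where "\<delta> > 0" and bound: "\<And>p. degree p \<le> L \<Longrightarrow> \<forall>y\<in>{a..1}. poly p y \<ge> 0 \<Longrightarrow>
      (\<Sum>j\<le>L. \<bar>coeff p j\<bar>) = 1 \<Longrightarrow> \<delta> \<le> (\<Sum>x\<in>S. \<omega> x * poly p x)"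
    using atomic_functional_normalized_bound[OF assms] by blast
  have "\<delta> * (\<Sum>j\<le>L. \<bar>coeff p j\<bar>) \<le> (\<Sum>x\<in>S. \<omega> x * poly p x)"
    if p: "degree p \<le> L" "\<forall>y\<in>{a..1}. poly p y \<ge> 0" for p
  proof (cases "p = 0")
    case False
    define \<sigma> where "\<sigma> = (\<Sum>j\<le>L. \<bar>coeff p j\<bar>)"
    have "0 < \<bar>coeff p (degree p)\<bar>" using False by simp
    also have "\<dots> \<le> \<sigma>" unfolding \<sigma>_def using p(1) by (intro member_le_sum) auto
    finally have "\<sigma> > 0" .
    \<comment> \<open>both sides are homogeneous in p, so normalize to coefficient sum 1\<close>
    have "\<delta> \<le> (\<Sum>x\<in>S. \<omega> x * poly (smult (1 / \<sigma>) p) x)"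
      using \<open>\<sigma> > 0\<close> p by (intro bound) (simp_all add: \<sigma>_def sum_divide_distrib[symmetric])
    then show ?thesis
      using \<open>\<sigma> > 0\<close> by (simp add: \<sigma>_def sum_divide_distrib[symmetric] pos_le_divide_eq mult.commute)
  qed simp
  then show ?thesis using \<open>\<delta> > 0\<close> by blast
qed

lemma poly_interpolating_inverse:
  assumes "finite S" "S \<subseteq> {0<..1}"
  obtains q :: "real poly" where "\<forall>j\<ge>twice_ind1 S. coeff q j = 0" "\<forall>x\<in>S. x * poly q x = 1"
    "\<forall>t\<in>{0<..1}. poly q t \<le> 1 / t"
proof -
  \<comment> \<open>1 - t q(t) = P(t) / P(0) for the polynomial P below, which is nonnegative on (0,1]
      and vanishes on S\<close>
  define F where "F = S \<inter> {0<..<1}"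
  define P where "P = (\<Prod>x\<in>F. [:-x, 1:]^2) * (if 1 \<in> S then [:1, -1:] else 1)"
  have poly_P: "poly P t = (\<Prod>x\<in>F. (t - x)^2) * (if 1 \<in> S then 1 - t else 1)" for t
    by (simp add: P_def poly_prod)
  have "degree P \<le> twice_ind1 S"
  proof -
    have "degree P \<le> degree (\<Prod>x\<in>F. [:-x, 1:]^2) + degree (if 1 \<in> S then [:1, -1:] else (1::real poly))"
      unfolding P_def by (rule degree_mult_le)
    also have "degree (\<Prod>x\<in>F. [:-x, 1:]^2) = 2 * card F"
      by (subst degree_prod_eq_sum_degree) (auto simp: degree_power_eq)
    finally show ?thesis by (simp add: twice_ind1_def F_def split: if_splits)
  qed
  have "poly P 0 > 0"
    using assms by (auto simp: poly_P F_def intro!: prod_pos)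
  define R where "R = 1 - smult (1 / poly P 0) P"
  have "poly R 0 = 0" using \<open>poly P 0 > 0\<close> by (simp add: R_def)
  then obtain q where q: "R = [:0, 1:] * q" by (metis dvdE minus_zero poly_eq_0_iff_dvd)
  have poly_q: "t * poly q t = 1 - poly P t / poly P 0" for t
    using arg_cong[OF q, of "\<lambda>p. poly p t"] by (simp add: R_def)
  show ?thesis
  proof
    show "\<forall>j\<ge>twice_ind1 S. coeff q j = 0"
    proof (cases "q = 0")
      case False
      have "degree R \<le> twice_ind1 S"
        unfolding R_def using \<open>degree P \<le> twice_ind1 S\<close>
        by (intro degree_diff_le) (auto simp: order.trans[OF degree_smult_le])
      then have "degree q < twice_ind1 S" using False by (simp add: q degree_mult_eq)
      then show ?thesis by (simp add: coeff_eq_0)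
    qed simp
    have "poly P x = 0" if "x \<in> S" for x
    proof (cases "x = 1")
      case False
      then have "x \<in> F" using that assms by (auto simp: F_def)
      then show ?thesis using assms by (auto simp: poly_P F_def prod_zero_iff)
    qed (use that in \<open>simp add: poly_P\<close>)
    then show "\<forall>x\<in>S. x * poly q x = 1" by (simp add: poly_q)
    have "0 \<le> poly P t" if "t \<le> 1" for t
      using that by (simp add: poly_P prod_nonneg)
    then show "\<forall>t\<in>{0<..1}. poly q t \<le> 1 / t"
      using poly_q \<open>poly P 0 > 0\<close> by (auto simp: le_divide_eq mult.commute divide_nonneg_pos)
  qed
qed

lemma moment_functional_Cons_diff:
  "moment_functional ((c - \<delta>) # u) p = moment_functional (c # u) p - \<delta> * coeff p 0"
  by (simp add: moment_functional_def sum.lessThan_Suc_shift algebra_simps del: sum.lessThan_Suc)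

lemma positive_on_Cons_diff:
  assumes "finite S" "atomic_moments S \<omega> (c # u)" "0 \<le> \<delta>"
    and margin: "\<forall>p. degree p \<le> length u \<longrightarrow> (\<forall>y\<in>{a..b}. poly p y \<ge> 0) \<longrightarrow>
      \<delta> * (\<Sum>j\<le>length u. \<bar>coeff p j\<bar>) \<le> (\<Sum>x\<in>S. \<omega> x * poly p x)"
  shows "positive_on ((c - \<delta>) # u) a b"
  unfolding positive_on_def
proof (intro allI impI)
  fix p :: "real poly"
  assume "degree p + 1 \<le> length ((c - \<delta>) # u)" and nonneg: "\<forall>x\<in>{a..b}. 0 \<le> poly p x"
  then have "degree p \<le> length u" by simp
  then have "moment_functional ((c - \<delta>) # u) p = (\<Sum>x\<in>S. \<omega> x * poly p x) - \<delta> * coeff p 0"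
    using moment_functional_atomic[OF assms(1,2)]
    by (simp add: moment_functional_Cons_diff coeff_eq_0)
  moreover have "coeff p 0 \<le> (\<Sum>j\<le>length u. \<bar>coeff p j\<bar>)"
    using member_le_sum[of 0 "{..length u}" "\<lambda>j. \<bar>coeff p j\<bar>"] by simp
  then have "\<delta> * coeff p 0 \<le> \<delta> * (\<Sum>j\<le>length u. \<bar>coeff p j\<bar>)"
    using \<open>0 \<le> \<delta>\<close> by (rule mult_left_mono)
  ultimately show "0 \<le> moment_functional ((c - \<delta>) # u) p"
    using margin \<open>degree p \<le> length u\<close> nonneg by fastforce
qed

lemma t1_drop_less:
  assumes S: "finite S" "S \<subseteq> {a..1}" "0 < a" "a < 1" "\<forall>x\<in>S. \<omega> x > 0"
    and mom: "atomic_moments S \<omega> s"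
    and k: "Suc k < length s" "length s \<le> k + twice_ind1 S"
  shows "t1 (drop (Suc k) s) < ereal (s ! k)"
proof -
  define u where "u = drop (Suc k) s"
  define \<omega>' where "\<omega>' = (\<lambda>x. \<omega> x * x ^ k)"
  have "drop k s = s ! k # u" using k by (simp add: u_def Cons_nth_drop_Suc)
  then have mom': "atomic_moments S \<omega>' (s ! k # u)"
    using atomic_moments_drop[OF mom, of k] by (simp add: \<omega>'_def)
  have "\<forall>x\<in>S. 0 < x \<and> 0 < \<omega> x" using S by force
  then have \<omega>'_pos: "\<forall>x\<in>S. \<omega>' x > 0" by (simp add: \<omega>'_def)
  \<comment> \<open>lowering a to a/2 puts every atom into the interior, as the margin lemma requires\<close>
  have "S \<subseteq> {a/2<..1}" "0 \<le> a/2" using S by fastforce+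
  moreover have "length u < twice_ind1 S" using k by (simp add: u_def)
  ultimately obtain \<delta> where "\<delta> > 0" and margin: "\<forall>p. degree p \<le> length u \<longrightarrow>
      (\<forall>y\<in>{a/2..1}. poly p y \<ge> 0) \<longrightarrow> \<delta> * (\<Sum>j\<le>length u. \<bar>coeff p j\<bar>) \<le> (\<Sum>x\<in>S. \<omega>' x * poly p x)"
    using atomic_functional_margin[OF S(1) _ _ \<omega>'_pos] by blast
  then have "positive_on ((s ! k - \<delta>) # u) (a/2) 1"
    by (intro positive_on_Cons_diff[OF S(1) mom']) auto
  then have "t1 u \<le> ereal (s ! k - \<delta>)"
    by (rule t1_le_of_positive_on_Cons) (use S in auto)
  also have "\<dots> < ereal (s ! k)" using \<open>\<delta> > 0\<close> by simp
  finally show ?thesis by (simp add: u_def)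
qed

lemma t1_take_drop_eq:
  assumes S: "finite S" "S \<subseteq> {a..1}" "0 < a" "a < 1" "\<forall>x\<in>S. \<omega> x > 0"
    and mom: "atomic_moments S \<omega> s"
    and k: "k + twice_ind1 S < length s"
  shows "ereal (s ! k) = t1 (take (twice_ind1 S) (drop (Suc k) s))"
proof -
  define u where "u = take (twice_ind1 S) (drop (Suc k) s)"
  have mom_u: "atomic_moments S (\<lambda>x. \<omega> x * x ^ Suc k) u"
    unfolding u_def by (intro atomic_moments_take atomic_moments_drop mom)
  have len_u: "length u = twice_ind1 S" using k by (simp add: u_def)
  have s_k: "s ! k = (\<Sum>x\<in>S. \<omega> x * x ^ k)" using mom k by (simp add: atomic_moments_def)
  have S_pos: "\<forall>x\<in>S. 0 < x" using S by auto
  have "t1 u \<le> ereal (\<Sum>x\<in>S. \<omega> x * x ^ Suc k / x)"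
    using S S_pos
    by (intro t1_le_atomic[OF S(1,2) S(3,4) order_refl _ mom_u]) (auto intro!: mult_nonneg_nonneg less_imp_le)
  also have "(\<Sum>x\<in>S. \<omega> x * x ^ Suc k / x) = s ! k"
    unfolding s_k using S_pos by (intro sum.cong) auto
  finally have upper: "t1 u \<le> ereal (s ! k)" .
  have "S \<subseteq> {0<..1}" using S by auto
  then obtain q where q: "\<forall>j\<ge>twice_ind1 S. coeff q j = 0" "\<forall>x\<in>S. x * poly q x = 1"
    "\<forall>t\<in>{0<..1}. poly q t \<le> 1 / t"
    by (rule poly_interpolating_inverse[OF S(1)])
  have "moment_functional u q = (\<Sum>x\<in>S. \<omega> x * x ^ k * (x * poly q x))"
    using moment_functional_atomic[OF S(1) mom_u] q(1) len_u by (simp add: algebra_simps)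
  also have "\<dots> = s ! k" using q(2) by (simp add: s_k)
  finally have "moment_functional u q = s ! k" .
  then have lower: "ereal (s ! k) \<le> t1 u"
    using moment_functional_le_integral_inverse[OF _ _ _ _ q(3), of _ u] q(1) len_u
    by (intro t1_ge) auto
  from lower upper show ?thesis by (simp add: u_def)
qed

lemma ind1_measure_finite_msupp:
  "finite (msupp M) \<Longrightarrow> ind1_measure M = ereal (real (twice_ind1 (msupp M)) / 2)"
  by (simp add: ind1_measure_def twice_ind1_def)

lemma moment_measure_finite_msupp:
  assumes M: "M \<in> moment_measures s a b" and fin: "finite (msupp M)"
  shows "msupp M \<subseteq> {a..b}" "\<forall>x\<in>msupp M. measure M {x} > 0"
    "atomic_moments (msupp M) (\<lambda>x. measure M {x}) s"
proof -
  have sets: "sets M = sets borel" and "finite_measure M" and "emeasure M (- {a..b}) = 0"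
    and mom: "\<forall>j<length s. (\<integral>x. x ^ j \<partial>M) = s ! j"
    using M by (auto simp: moment_measures_def)
  show "msupp M \<subseteq> {a..b}" by (rule msupp_subset_interval) fact+
  show pos: "\<forall>x\<in>msupp M. measure M {x} > 0"
    using measure_singleton_pos_msupp[OF sets \<open>finite_measure M\<close> fin] by blast
  have "(\<integral>x. x ^ j \<partial>M) = (\<Sum>x\<in>msupp M. measure M {x} * x ^ j)" for j
    by (subst finite_msupp_eq_atomic_measure[OF sets \<open>finite_measure M\<close> fin])
      (simp add: integral_atomic_measure fin)
  then show "atomic_moments (msupp M) (\<lambda>x. measure M {x}) s"
    using mom by (simp add: atomic_moments_def)
qed

lemma ind1_attained:
  assumes "positive_on_01 s"
  obtains S \<omega> a where "finite S" "S \<subseteq> {a..1}" "0 < a" "a < 1" "\<forall>x\<in>S. \<omega> x > 0"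
    "atomic_moments S \<omega> s" "ind1 s = ereal (real (twice_ind1 S) / 2)"
proof -
  define finite_rep where "finite_rep M \<longleftrightarrow> M \<in> moment_measures_1 s \<and> finite (msupp M)" for M
  obtain a b where ab: "0 < a" "a < b" "b \<le> 1" "positive_on s a b"
    using assms unfolding positive_on_01_def by blast
  obtain S0 w0 where S0: "finite S0" "S0 \<subseteq> {a..b}" "\<forall>x\<in>S0. w0 x > 0" "atomic_moments S0 w0 s"
    by (rule positive_on_imp_atomic_moments[OF ab(4) order.strict_implies_order[OF ab(2)]])
  have "atomic_measure S0 w0 \<in> moment_measures s a b"
    using S0 by (intro atomic_measure_in_moment_measures) auto
  then have "finite_rep (atomic_measure S0 w0)"
    using ab S0 by (auto simp: finite_rep_def moment_measures_1_def msupp_atomic_measure)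
  then obtain \<mu> where "finite_rep \<mu>" and least: "\<And>M. finite_rep M \<Longrightarrow> twice_ind1 (msupp \<mu>) \<le> twice_ind1 (msupp M)"
    using ex_has_least_nat[of finite_rep _ "\<lambda>M. twice_ind1 (msupp M)"] by blast
  have "ind1 s = ind1_measure \<mu>"
    unfolding ind1_def
  proof (rule antisym)
    show "(INF M\<in>moment_measures_1 s. ind1_measure M) \<le> ind1_measure \<mu>"
      using \<open>finite_rep \<mu>\<close> by (intro INF_lower) (simp add: finite_rep_def)
    show "ind1_measure \<mu> \<le> (INF M\<in>moment_measures_1 s. ind1_measure M)"
    proof (rule INF_greatest)
      fix M assume "M \<in> moment_measures_1 s"
      show "ind1_measure \<mu> \<le> ind1_measure M"
      proof (cases "finite (msupp M)")
        case True
        then show ?thesis using least[of M] \<open>finite_rep \<mu>\<close> \<open>M \<in> moment_measures_1 s\<close>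
          by (simp add: finite_rep_def ind1_measure_finite_msupp divide_right_mono)
      qed (simp add: ind1_measure_def)
    qed
  qed
  moreover obtain a' b' where "0 < a'" "a' < b'" "b' \<le> 1" "\<mu> \<in> moment_measures s a' b'"
    using \<open>finite_rep \<mu>\<close> unfolding finite_rep_def moment_measures_1_def by blast
  ultimately show ?thesis
    using that[of "msupp \<mu>" a'] moment_measure_finite_msupp[of \<mu> s a' b'] \<open>finite_rep \<mu>\<close>
    by (fastforce simp: finite_rep_def ind1_measure_finite_msupp)
qed

theorem theorem8p6:
  fixes n :: nat and s :: "real list"
  assumes len: "length s = Suc n"
    and nonneg: "\<forall>k<length s. s ! k \<ge> 0"
    and pos: "positive_on_01 s"
  shows "(\<forall>k::nat. ereal (real n) - (2 * ind1 s - 1) \<le> ereal (real k) \<and> k + 1 \<le> n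
            \<longrightarrow> t1 (drop (Suc k) s) < ereal (s ! k))
       \<and> (\<forall>(k::nat) (N::int). ereal (real_of_int N) = 2 * ind1 s - 1
            \<longrightarrow> real k \<le> real n - real_of_int N - 1
            \<longrightarrow> ereal (s ! k) = t1 (take (nat (N + 1)) (drop (Suc k) s)))"
proof -
  obtain S \<omega> a where S: "finite S" "S \<subseteq> {a..1}" "0 < a" "a < 1" "\<forall>x\<in>S. \<omega> x > 0"
    and mom: "atomic_moments S \<omega> s" and "ind1 s = ereal (real (twice_ind1 S) / 2)"
    by (rule ind1_attained[OF pos])
  then have N_eq: "2 * ind1 s - 1 = ereal (real (twice_ind1 S) - 1)"
    by (simp add: one_ereal_def)
  show ?thesis
  proof (intro conjI allI impI)
    fix k assume "ereal (real n) - (2 * ind1 s - 1) \<le> ereal (real k) \<and> k + 1 \<le> n"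
    then have "Suc k < length s" "length s \<le> k + twice_ind1 S"
      using len N_eq by auto
    then show "t1 (drop (Suc k) s) < ereal (s ! k)" by (rule t1_drop_less[OF S mom])
  next
    fix k N assume "ereal (real_of_int N) = 2 * ind1 s - 1" "real k \<le> real n - real_of_int N - 1"
    then have "nat (N + 1) = twice_ind1 S" "k + twice_ind1 S < length s"
      using len N_eq by auto
    then show "ereal (s ! k) = t1 (take (nat (N + 1)) (drop (Suc k) s))"
      using t1_take_drop_eq[OF S mom] by simp
  qed
qed

end
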